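(* Let $\mathcal{X}$ and $\mathcal{Y}$ be discrete (finite or countable) alphabets. Let $\{p_\theta\}_{\theta\in\Theta}$ be a nonempty family of probability distributions on $\mathcal{X}$ (the uncertain distributions of $X$) and let $\{\boldsymbol{P}_\lambda\}_{\lambda\in\Lambda}$ be a nonempty family of transition probability matrices $\boldsymbol{P}_\lambda=(p_\lambda(y|x))_{x\in\mathcal X,y\in\mathcal Y}$ (the uncertain transition probability matrices of $Y$ given $X$). Then $$\hat H(X,Y)\le \hat H(X)+\hat H(Y|X).$$ Moreover, equality holds when $\Theta$ and $\Lambda$ are singletons (i.e. the distribution of $X$ and the transition matrix of $Y$ given $X$are deterministic), and if $\hat H(Y|X)=0$ then $\hat H(X,Y)=\hat H(X)$.
   Context: Convention: $0\log\frac10=0$; all quantities take values in $[0,\infty]$. The nonlinear quantities are defined by $\hat H(X)=\sup_{\theta\in\Theta}\sum_x p_\theta(x)\log\frac{1}{p_\theta(x)}$; $\hat H(X,Y)=\sup_{\theta\in\Theta}\sup_{\lambda\in\Lambda}\sum_{x,y}p_\theta(x)p_\lambda(y|x)\log\frac{1}{p_\theta(x)p_\lambda(y|x)}$; $\hat H(Y|X=x)=\sup_{\lambda\in\Lambda}\sum_y p_\lambda(y|x)\log\frac{1}{p_\lambda(y|x)}$; $\hat H(Y|X)=\sup_{\theta\in\Theta}\sum_x p_\theta(x)\hat H(Y|X=x)$. *)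

theory Defs
  imports "HOL-Analysis.Analysis"
begin

definition ent_term :: "real \<Rightarrow> ennreal" where
  "ent_term t = ennreal (if t = 0 then 0 else t * ln (1 / t))"

definition is_distr :: "('x \<Rightarrow> real) \<Rightarrow> bool" where
  "is_distr q \<longleftrightarrow> (\<forall>x. q x \<ge> 0) \<and> (q has_sum 1) UNIV"

definition is_transition :: "('x \<Rightarrow> 'y \<Rightarrow> real) \<Rightarrow> bool" where
  "is_transition W \<longleftrightarrow> (\<forall>x. is_distr (W x))"

definition nl_H_X :: "'t set \<Rightarrow> ('t \<Rightarrow> 'x \<Rightarrow> real) \<Rightarrow> ennreal" where
  "nl_H_X \<Theta> p = (SUP \<theta>\<in>\<Theta>. \<Sum>\<^sub>\<infinity>x. ent_term (p \<theta> x))"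

definition nl_H_XY :: "'t set \<Rightarrow> 'l set \<Rightarrow> ('t \<Rightarrow> 'x \<Rightarrow> real) \<Rightarrow> ('l \<Rightarrow> 'x \<Rightarrow> 'y \<Rightarrow> real) \<Rightarrow> ennreal" where
  "nl_H_XY \<Theta> \<Lambda> p P = (SUP \<theta>\<in>\<Theta>. SUP l\<in>\<Lambda>.
      infsum (\<lambda>(x, y). ent_term (p \<theta> x * P l x y)) UNIV)"

definition nl_H_Y_given_x :: "'l set \<Rightarrow> ('l \<Rightarrow> 'x \<Rightarrow> 'y \<Rightarrow> real) \<Rightarrow> 'x \<Rightarrow> ennreal" where
  "nl_H_Y_given_x \<Lambda> P x = (SUP l\<in>\<Lambda>. \<Sum>\<^sub>\<infinity>y. ent_term (P l x y))"

definition nl_H_Y_given_X :: "'t set \<Rightarrow> 'l set \<Rightarrow> ('t \<Rightarrow> 'x \<Rightarrow> real) \<Rightarrow> ('l \<Rightarrow> 'x \<Rightarrow> 'y \<Rightarrow> real) \<Rightarrow> ennreal" where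
  "nl_H_Y_given_X \<Theta> \<Lambda> p P = (SUP \<theta>\<in>\<Theta>. \<Sum>\<^sub>\<infinity>x. ennreal (p \<theta> x) * nl_H_Y_given_x \<Lambda> P x)"

end

theory Submission
  imports Defs
begin

text \<open>The summand t log(1/t) satisfies the product rule
  (ab) log(1/(ab)) = (a log(1/a)) b + a (b log(1/b)). Summing it over the joint alphabet gives the
  chain rule H(X,Y) = H(X) + \<Sum> p(x) H(Y|X=x) for every fixed \<theta> and \<lambda>; all sums live in
  [0,\<infinity>], where Fubini needs no summability hypotheses. Bounding each of the two terms by its
  supremum yields the inequality, and with singleton families nothing is lost. Dropping the
  second term shows H(X) \<le> H(X,Y), which together with the inequality gives the case
  H(Y|X) = 0.\<close>

lemma sum_le_infsum_ennreal:
  fixes f :: "'a \<Rightarrow> ennreal"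
  assumes "finite F" "F \<subseteq> A"
  shows "sum f F \<le> infsum f A"
  using assms by (subst nonneg_infsum_complete) (auto intro!: SUP_upper)

lemma infsum_add_ennreal:
  fixes f g :: "'a \<Rightarrow> ennreal"
  shows "(\<Sum>\<^sub>\<infinity>x\<in>A. f x + g x) = infsum f A + infsum g A"
  by (intro infsum_add nonneg_summable_on_complete) simp_all

lemma infsum_sum_ennreal:
  fixes f :: "'i \<Rightarrow> 'a \<Rightarrow> ennreal"
  assumes "finite I"
  shows "(\<Sum>\<^sub>\<infinity>y\<in>A. \<Sum>i\<in>I. f i y) = (\<Sum>i\<in>I. infsum (f i) A)"
  using assms by (induction I rule: finite_induct) (simp_all add: infsum_add_ennreal)

lemma infsum_Times_ennreal:
  fixes f :: "'a \<times> 'b \<Rightarrow> ennreal"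
  shows "infsum f (A \<times> B) = (\<Sum>\<^sub>\<infinity>x\<in>A. \<Sum>\<^sub>\<infinity>y\<in>B. f (x, y))"
proof (rule antisym)
  show "infsum f (A \<times> B) \<le> (\<Sum>\<^sub>\<infinity>x\<in>A. \<Sum>\<^sub>\<infinity>y\<in>B. f (x, y))"
  proof (subst nonneg_infsum_complete, simp, rule SUP_least, clarify)
    fix F assume F: "finite F" "F \<subseteq> A \<times> B"
    have "sum f F \<le> sum f (fst ` F \<times> snd ` F)"
      using F by (intro sum_mono2) (auto intro: rev_image_eqI)
    also have "\<dots> = (\<Sum>x\<in>fst ` F. \<Sum>y\<in>snd ` F. f (x, y))"
      by (simp add: sum.cartesian_product)
    also have "\<dots> \<le> (\<Sum>x\<in>fst ` F. \<Sum>\<^sub>\<infinity>y\<in>B. f (x, y))"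
      using F by (intro sum_mono sum_le_infsum_ennreal) auto
    also have "\<dots> \<le> (\<Sum>\<^sub>\<infinity>x\<in>A. \<Sum>\<^sub>\<infinity>y\<in>B. f (x, y))"
      using F by (intro sum_le_infsum_ennreal) auto
    finally show "sum f F \<le> (\<Sum>\<^sub>\<infinity>x\<in>A. \<Sum>\<^sub>\<infinity>y\<in>B. f (x, y))" .
  qed
  show "(\<Sum>\<^sub>\<infinity>x\<in>A. \<Sum>\<^sub>\<infinity>y\<in>B. f (x, y)) \<le> infsum f (A \<times> B)"
  proof (subst nonneg_infsum_complete, simp, rule SUP_least, clarify)
    fix X assume X: "finite X" "X \<subseteq> A"
    have "(\<Sum>x\<in>X. \<Sum>\<^sub>\<infinity>y\<in>B. f (x, y)) = (\<Sum>\<^sub>\<infinity>y\<in>B. \<Sum>x\<in>X. f (x, y))"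
      using X by (simp add: infsum_sum_ennreal)
    also have "\<dots> \<le> infsum f (A \<times> B)"
    proof (subst nonneg_infsum_complete, simp, rule SUP_least, clarify)
      fix G assume G: "finite G" "G \<subseteq> B"
      have "(\<Sum>y\<in>G. \<Sum>x\<in>X. f (x, y)) = sum f (X \<times> G)"
        by (subst sum.swap) (simp add: sum.cartesian_product)
      also have "\<dots> \<le> infsum f (A \<times> B)"
        using X G by (intro sum_le_infsum_ennreal) auto
      finally show "(\<Sum>y\<in>G. \<Sum>x\<in>X. f (x, y)) \<le> infsum f (A \<times> B)" .
    qed
    finally show "(\<Sum>x\<in>X. \<Sum>\<^sub>\<infinity>y\<in>B. f (x, y)) \<le> infsum f (A \<times> B)" .
  qed
qed

lemma infsum_cmult_right_ennreal:
  fixes f :: "'a \<Rightarrow> ennreal"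
  shows "(\<Sum>\<^sub>\<infinity>x\<in>A. c * f x) = c * infsum f A"
  by (simp add: nonneg_infsum_complete SUP_mult_left_ennreal sum_distrib_left)

lemma is_distr_le_1:
  assumes "is_distr q"
  shows "q x \<le> 1"
  using finite_sum_le_has_sum[where f = q and A = UNIV and B = "{x}"] assms
  by (simp add: is_distr_def)

lemma infsum_ennreal_distr:
  assumes "is_distr q"
  shows "(\<Sum>\<^sub>\<infinity>x. ennreal (q x)) = 1"
proof -
  have "ennreal \<midarrow>1\<rightarrow> ennreal 1"
    by (rule tendsto_ennrealI[OF tendsto_ident_at])
  then have "((ennreal \<circ> q) has_sum ennreal 1) UNIV"
    using assms unfolding is_distr_def
    by (intro has_sum_comm_additive_general) auto
  then show ?thesis
    by (simp add: infsumI o_def)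
qed

text \<open>Since ln 0 = 0 in Isabelle, the case distinction in ent_term is redundant.\<close>

lemma ent_term_eq: "ent_term t = ennreal (t * ln (1 / t))"
  by (simp add: ent_term_def)

lemma entropy_summand_mult:
  fixes a b :: real
  assumes "0 \<le> a" "0 \<le> b"
  shows "a * b * ln (1 / (a * b)) = a * ln (1 / a) * b + a * (b * ln (1 / b))"
proof (cases "a = 0 \<or> b = 0")
  case False
  with assms have "ln (1 / (a * b)) = ln (1 / a) + ln (1 / b)"
    by (simp add: ln_div ln_mult)
  then show ?thesis
    by (simp add: algebra_simps)
qed auto

lemma ent_term_mult:
  fixes a b :: real
  assumes "0 \<le> a" "a \<le> 1" "0 \<le> b" "b \<le> 1"
  shows "ent_term (a * b) = ent_term a * ennreal b + ennreal a * ent_term b"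
proof -
  have summand_nonneg: "0 \<le> t * ln (1 / t)" if "0 \<le> t" "t \<le> 1" for t :: real
    using that by (cases "t = 0") auto
  have "ent_term a * ennreal b + ennreal a * ent_term b
      = ennreal (a * ln (1 / a) * b) + ennreal (a * (b * ln (1 / b)))"
    using assms summand_nonneg[of a] summand_nonneg[of b]
    by (simp add: ent_term_eq ennreal_mult'')
  also have "\<dots> = ent_term (a * b)"
    using assms summand_nonneg[of a] summand_nonneg[of b]
    by (simp add: ent_term_eq entropy_summand_mult ennreal_plus)
  finally show ?thesis ..
qed

lemma joint_entropy_chain_rule:
  assumes q: "is_distr q" and W: "is_transition W"
  shows "(\<Sum>\<^sub>\<infinity>(x, y). ent_term (q x * W x y))
    = (\<Sum>\<^sub>\<infinity>x. ent_term (q x)) + (\<Sum>\<^sub>\<infinity>x. ennreal (q x) * (\<Sum>\<^sub>\<infinity>y. ent_term (W x y)))"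
proof -
  have Wx: "is_distr (W x)" for x
    using W by (simp add: is_transition_def)
  have bounds: "0 \<le> r x" "r x \<le> 1" if "is_distr r" for r :: "'c \<Rightarrow> real" and x
    using that is_distr_le_1[OF that] by (auto simp: is_distr_def)
  have "(\<Sum>\<^sub>\<infinity>(x, y). ent_term (q x * W x y))
      = (\<Sum>\<^sub>\<infinity>x. \<Sum>\<^sub>\<infinity>y. ent_term (q x) * ennreal (W x y) + ennreal (q x) * ent_term (W x y))"
    by (subst infsum_Times_ennreal[where A = UNIV and B = UNIV, simplified])
      (simp add: ent_term_mult bounds[OF q] bounds[OF Wx])
  also have "\<dots> = (\<Sum>\<^sub>\<infinity>x. ent_term (q x) * (\<Sum>\<^sub>\<infinity>y. ennreal (W x y))
      + ennreal (q x) * (\<Sum>\<^sub>\<infinity>y. ent_term (W x y)))"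
    by (simp add: infsum_add_ennreal infsum_cmult_right_ennreal)
  also have "\<dots> = (\<Sum>\<^sub>\<infinity>x. ent_term (q x)) + (\<Sum>\<^sub>\<infinity>x. ennreal (q x) * (\<Sum>\<^sub>\<infinity>y. ent_term (W x y)))"
    by (simp add: infsum_ennreal_distr[OF Wx] infsum_add_ennreal)
  finally show ?thesis .
qed

lemma nl_H_XY_le_add:
  assumes distr: "\<And>\<theta>. \<theta> \<in> \<Theta> \<Longrightarrow> is_distr (p \<theta>)"
    and transition: "\<And>l. l \<in> \<Lambda> \<Longrightarrow> is_transition (P l)"
  shows "nl_H_XY \<Theta> \<Lambda> p P \<le> nl_H_X \<Theta> p + nl_H_Y_given_X \<Theta> \<Lambda> p P"
  unfolding nl_H_XY_def
proof (intro SUP_least)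
  fix \<theta> l assume \<theta>: "\<theta> \<in> \<Theta>" and l: "l \<in> \<Lambda>"
  have cond_le: "(\<Sum>\<^sub>\<infinity>y. ent_term (P l x y)) \<le> nl_H_Y_given_x \<Lambda> P x" for x
    unfolding nl_H_Y_given_x_def using l by (rule SUP_upper)
  have "(\<Sum>\<^sub>\<infinity>(x, y). ent_term (p \<theta> x * P l x y))
      = (\<Sum>\<^sub>\<infinity>x. ent_term (p \<theta> x)) + (\<Sum>\<^sub>\<infinity>x. ennreal (p \<theta> x) * (\<Sum>\<^sub>\<infinity>y. ent_term (P l x y)))"
    using distr[OF \<theta>] transition[OF l] by (rule joint_entropy_chain_rule)
  also have "\<dots> \<le> (\<Sum>\<^sub>\<infinity>x. ent_term (p \<theta> x)) + (\<Sum>\<^sub>\<infinity>x. ennreal (p \<theta> x) * nl_H_Y_given_x \<Lambda> P x)"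
    by (intro add_left_mono infsum_mono mult_left_mono cond_le nonneg_summable_on_complete) auto
  also have "\<dots> \<le> nl_H_X \<Theta> p + nl_H_Y_given_X \<Theta> \<Lambda> p P"
    unfolding nl_H_X_def nl_H_Y_given_X_def using \<theta> by (intro add_mono SUP_upper)
  finally show "(\<Sum>\<^sub>\<infinity>(x, y). ent_term (p \<theta> x * P l x y)) \<le> nl_H_X \<Theta> p + nl_H_Y_given_X \<Theta> \<Lambda> p P" .
qed

lemma nl_H_X_le_nl_H_XY:
  assumes distr: "\<And>\<theta>. \<theta> \<in> \<Theta> \<Longrightarrow> is_distr (p \<theta>)"
    and transition: "\<And>l. l \<in> \<Lambda> \<Longrightarrow> is_transition (P l)"
    and nonempty: "\<Lambda> \<noteq> {}"
  shows "nl_H_X \<Theta> p \<le> nl_H_XY \<Theta> \<Lambda> p P"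
  unfolding nl_H_X_def
proof (intro SUP_least)
  fix \<theta> assume \<theta>: "\<theta> \<in> \<Theta>"
  obtain l where l: "l \<in> \<Lambda>"
    using nonempty by blast
  have "(\<Sum>\<^sub>\<infinity>x. ent_term (p \<theta> x)) \<le> (\<Sum>\<^sub>\<infinity>(x, y). ent_term (p \<theta> x * P l x y))"
    using joint_entropy_chain_rule[OF distr[OF \<theta>] transition[OF l]] by simp
  also have "\<dots> \<le> nl_H_XY \<Theta> \<Lambda> p P"
    unfolding nl_H_XY_def using \<theta> l by (intro SUP_upper2[OF \<theta>] SUP_upper)
  finally show "(\<Sum>\<^sub>\<infinity>x. ent_term (p \<theta> x)) \<le> nl_H_XY \<Theta> \<Lambda> p P" .
qed

lemma nl_H_XY_singleton:
  assumes "is_distr (p \<theta>)" "is_transition (P l)"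
  shows "nl_H_XY {\<theta>} {l} p P = nl_H_X {\<theta>} p + nl_H_Y_given_X {\<theta>} {l} p P"
  using joint_entropy_chain_rule[OF assms]
  by (simp add: nl_H_XY_def nl_H_X_def nl_H_Y_given_X_def nl_H_Y_given_x_def)

theorem theorem4:
  fixes \<Theta> :: "'t set" and \<Lambda> :: "'l set"
    and p :: "'t \<Rightarrow> 'x::countable \<Rightarrow> real"
    and P :: "'l \<Rightarrow> 'x \<Rightarrow> 'y::countable \<Rightarrow> real"
  assumes "\<Theta> \<noteq> {}" and "\<Lambda> \<noteq> {}"
    and "\<And>\<theta>. \<theta> \<in> \<Theta> \<Longrightarrow> is_distr (p \<theta>)"
    and "\<And>l. l \<in> \<Lambda> \<Longrightarrow> is_transition (P l)"
  shows "nl_H_XY \<Theta> \<Lambda> p P \<le> nl_H_X \<Theta> p + nl_H_Y_given_X \<Theta> \<Lambda> p P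
     \<and> ((\<exists>\<theta>0 l0. \<Theta> = {\<theta>0} \<and> \<Lambda> = {l0}) \<longrightarrow>
           nl_H_XY \<Theta> \<Lambda> p P = nl_H_X \<Theta> p + nl_H_Y_given_X \<Theta> \<Lambda> p P)
     \<and> (nl_H_Y_given_X \<Theta> \<Lambda> p P = 0 \<longrightarrow> nl_H_XY \<Theta> \<Lambda> p P = nl_H_X \<Theta> p)"
proof (intro conjI impI)
  show le: "nl_H_XY \<Theta> \<Lambda> p P \<le> nl_H_X \<Theta> p + nl_H_Y_given_X \<Theta> \<Lambda> p P"
    using assms(3,4) by (rule nl_H_XY_le_add)
  show "nl_H_XY \<Theta> \<Lambda> p P = nl_H_X \<Theta> p + nl_H_Y_given_X \<Theta> \<Lambda> p P"
    if "\<exists>\<theta>0 l0. \<Theta> = {\<theta>0} \<and> \<Lambda> = {l0}"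
    using that assms(3,4) nl_H_XY_singleton by auto
  have "nl_H_X \<Theta> p \<le> nl_H_XY \<Theta> \<Lambda> p P"
    using assms(3,4,2) by (rule nl_H_X_le_nl_H_XY)
  with le show "nl_H_XY \<Theta> \<Lambda> p P = nl_H_X \<Theta> p" if "nl_H_Y_given_X \<Theta> \<Lambda> p P = 0"
    using that by (simp add: antisym)
qed

end
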